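(* Let $\mathbf{F}$ be a Baire foliage tree on a topological space $X$ and let $p\in X$. Then: (a) $\mathbf{F}$ is nonincreasing, $\mathrm{flesh}\,\mathbf{F}=\mathbf{F}_{0_{\mathbf{F}}}$, and the height of $\mathbf{F}$ is $\omega$; (b) for every node $v$ of $\mathbf{F}$, the leaf $\mathbf{F}_v$ is closed-and-open in $X$ and $|\mathbf{F}_v|=2^{\omega}$; (c) $\mathrm{scope}_{\mathbf{F}}(p)$ is a branch in $\mathbf{F}$; (d) for every $n\in\omega$ there is exactly one $v\in\mathrm{scope}_{\mathbf{F}}(p)$ with $\mathrm{height}_{\mathbf{F}}(v)=n$.
   Context: $\omega=\{0,1,2,\dots\}$, ${}^{<\omega}\omega$ is the set of finite sequences of natural numbers. A tree is a strict partial order $(T,<)$ in which the set of predecessors of every node is well-ordered; $\mathrm{height}_T(x)$ is the ordinal isomorphic to the set of predecessors of $x$; the height of $T$ is the least ordinal $\beta$ such that no node has height $\beta$; a branch is a $\subseteq$-maximal chain; $\mathrm{sons}_T(x)$ is the set of immediate successors of $x$; $0_T$ denotes the least node. A foliage tree is a pair $\mathbf{F}=(T,l)$ with $T$ a tree (the skeleton) and $l$ a function on the nodes of $T$; $\mathbf{F}_x:=l(x)$ is the leaf at $x$; tree notions apply to $\mathbf{F}$ via its skeleton; $\mathrm{flesh}\,\mathbf{F}=\bigcup_x\mathbf{F}_x$; $\mathrm{scope}_{\mathbf{F}}(p)=\{x:p\in\mathbf{F}_x\}$. $\mathbf{F}$ is nonincreasing if $y\geq x$ implies $\mathbf{F}_y\subseteq\mathbf{F}_x$.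 $\mathbf{F}$ is locally strict if for every non-maximal node $x$, $\mathbf{F}_x$ is the union of the pairwise disjoint sets $\mathbf{F}_s$, $s\in\mathrm{sons}(x)$; $\mathbf{F}$ has strict branches if it has at least one node and for every branch $B$, $\bigcap_{x\in B}\mathbf{F}_x$ is a singleton; $\mathbf{F}$ is open in $X$ if all leaves are open in $X$; $\mathbf{F}$ is a foliage $\omega,\omega$-tree if its skeleton is order-isomorphic to $({}^{<\omega}\omega,\subsetneq)$. A Baire foliage tree on $X$ is an open in $X$, locally strict foliage $\omega,\omega$-tree with strict branches such that $\mathbf{F}_{0_{\mathbf{F}}}=X$. *)

theory Defs
  imports "HOL-Analysis.Analysis" "HOL-Library.Sublist" "HOL-Library.Equipollence"
begin

definition is_tree :: "'n set \<Rightarrow> ('n \<Rightarrow> 'n \<Rightarrow> bool) \<Rightarrow> bool" where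
  "is_tree N lt \<longleftrightarrow>
     (\<forall>x\<in>N. \<not> lt x x) \<and>
     (\<forall>x\<in>N. \<forall>y\<in>N. \<forall>z\<in>N. lt x y \<longrightarrow> lt y z \<longrightarrow> lt x z) \<and>
     (\<forall>x\<in>N. let P = {y\<in>N. lt y x} in
        (\<forall>a\<in>P. \<forall>b\<in>P. a = b \<or> lt a b \<or> lt b a) \<and>
        wf {(a, b). a \<in> P \<and> b \<in> P \<and> lt a b})"

definition preds :: "'n set \<Rightarrow> ('n \<Rightarrow> 'n \<Rightarrow> bool) \<Rightarrow> 'n \<Rightarrow> 'n set" where
  "preds N lt x = {y\<in>N. lt y x}"

text \<open>Height of a node whose predecessor set is finite (the finite ordinal = its cardinality).\<close>
definition node_height :: "'n set \<Rightarrow> ('n \<Rightarrow> 'n \<Rightarrow> bool) \<Rightarrow> 'n \<Rightarrow> nat" where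
  "node_height N lt x = card (preds N lt x)"

text \<open>The height of the tree (least ordinal that is not the height of a node) equals omega:
  every node has finite height and every natural number is the height of some node.\<close>
definition tree_height_omega :: "'n set \<Rightarrow> ('n \<Rightarrow> 'n \<Rightarrow> bool) \<Rightarrow> bool" where
  "tree_height_omega N lt \<longleftrightarrow>
     (\<forall>x\<in>N. finite (preds N lt x)) \<and> (\<forall>n::nat. \<exists>x\<in>N. node_height N lt x = n)"

definition tree_root :: "'n set \<Rightarrow> ('n \<Rightarrow> 'n \<Rightarrow> bool) \<Rightarrow> 'n" where
  "tree_root N lt = (THE r. r \<in> N \<and> (\<forall>x\<in>N. x \<noteq> r \<longrightarrow> lt r x))"

definition sons :: "'n set \<Rightarrow> ('n \<Rightarrow> 'n \<Rightarrow> bool) \<Rightarrow> 'n \<Rightarrow> 'n set" where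
  "sons N lt x = {y\<in>N. lt x y \<and> \<not> (\<exists>z\<in>N. lt x z \<and> lt z y)}"

definition is_maximal_node :: "'n set \<Rightarrow> ('n \<Rightarrow> 'n \<Rightarrow> bool) \<Rightarrow> 'n \<Rightarrow> bool" where
  "is_maximal_node N lt x \<longleftrightarrow> \<not> (\<exists>y\<in>N. lt x y)"

definition is_chain :: "'n set \<Rightarrow> ('n \<Rightarrow> 'n \<Rightarrow> bool) \<Rightarrow> 'n set \<Rightarrow> bool" where
  "is_chain N lt C \<longleftrightarrow> C \<subseteq> N \<and> (\<forall>x\<in>C. \<forall>y\<in>C. x = y \<or> lt x y \<or> lt y x)"

definition is_branch :: "'n set \<Rightarrow> ('n \<Rightarrow> 'n \<Rightarrow> bool) \<Rightarrow> 'n set \<Rightarrow> bool" where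
  "is_branch N lt B \<longleftrightarrow> is_chain N lt B \<and> (\<forall>C. is_chain N lt C \<and> B \<subseteq> C \<longrightarrow> C = B)"

definition flesh :: "'n set \<Rightarrow> ('n \<Rightarrow> 'a set) \<Rightarrow> 'a set" where
  "flesh N l = (\<Union>x\<in>N. l x)"

definition scope :: "'n set \<Rightarrow> ('n \<Rightarrow> 'a set) \<Rightarrow> 'a \<Rightarrow> 'n set" where
  "scope N l p = {x\<in>N. p \<in> l x}"

definition nonincreasing :: "'n set \<Rightarrow> ('n \<Rightarrow> 'n \<Rightarrow> bool) \<Rightarrow> ('n \<Rightarrow> 'a set) \<Rightarrow> bool" where
  "nonincreasing N lt l \<longleftrightarrow> (\<forall>x\<in>N. \<forall>y\<in>N. (y = x \<or> lt x y) \<longrightarrow> l y \<subseteq> l x)"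

definition locally_strict :: "'n set \<Rightarrow> ('n \<Rightarrow> 'n \<Rightarrow> bool) \<Rightarrow> ('n \<Rightarrow> 'a set) \<Rightarrow> bool" where
  "locally_strict N lt l \<longleftrightarrow>
     (\<forall>x\<in>N. \<not> is_maximal_node N lt x \<longrightarrow>
        l x = (\<Union>s\<in>sons N lt x. l s) \<and> disjoint_family_on l (sons N lt x))"

definition strict_branches :: "'n set \<Rightarrow> ('n \<Rightarrow> 'n \<Rightarrow> bool) \<Rightarrow> ('n \<Rightarrow> 'a set) \<Rightarrow> bool" where
  "strict_branches N lt l \<longleftrightarrow> N \<noteq> {} \<and>
     (\<forall>B. is_branch N lt B \<longrightarrow> (\<exists>p. (\<Inter>x\<in>B. l x) = {p}))"

definition open_foliage :: "'a topology \<Rightarrow> 'n set \<Rightarrow> ('n \<Rightarrow> 'a set) \<Rightarrow> bool" where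
  "open_foliage X N l \<longleftrightarrow> (\<forall>x\<in>N. openin X (l x))"

definition omega_omega_tree :: "'n set \<Rightarrow> ('n \<Rightarrow> 'n \<Rightarrow> bool) \<Rightarrow> bool" where
  "omega_omega_tree N lt \<longleftrightarrow>
     (\<exists>f. bij_betw f N (UNIV :: nat list set) \<and>
          (\<forall>x\<in>N. \<forall>y\<in>N. lt x y \<longleftrightarrow> strict_prefix (f x) (f y)))"

definition baire_foliage_tree ::
  "'a topology \<Rightarrow> 'n set \<Rightarrow> ('n \<Rightarrow> 'n \<Rightarrow> bool) \<Rightarrow> ('n \<Rightarrow> 'a set) \<Rightarrow> bool" where
  "baire_foliage_tree X N lt l \<longleftrightarrow>
     is_tree N lt \<and> omega_omega_tree N lt \<and> open_foliage X N l \<and>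
     locally_strict N lt l \<and> strict_branches N lt l \<and>
     l (tree_root N lt) = topspace X"

end

theory Submission
  imports Defs
begin

text \<open>Transport the foliage along the isomorphism with finite sequences: the leaf at a sequence
  is the disjoint union of the leaves at its one-step extensions, so each level of the tree
  partitions the whole space into open sets. Hence every leaf is clopen (its complement is the
  union of the other leaves of its level), every point lies in exactly one leaf per level, and
  those leaves form a branch. Every infinite sequence determines a branch and hence a point, and
  different sequences give points in disjoint leaves, which yields \<open>2\<^sup>\<omega>\<close> points in every leaf;
  conversely a point is determined by its scope, a subset of a countable set.\<close>

lemma immediate_strict_prefix_iff:
  "(strict_prefix s t \<and> \<not> (\<exists>u. strict_prefix s u \<and> strict_prefix u t)) \<longleftrightarrow> (\<exists>k. t = s @ [k])"
proof
  assume immediate: "strict_prefix s t \<and> \<not> (\<exists>u. strict_prefix s u \<and> strict_prefix u t)"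
  then obtain k c where t: "t = s @ k # c" by (auto elim: strict_prefixE')
  have "c = []"
  proof (rule ccontr)
    assume "c \<noteq> []"
    then have "strict_prefix (s @ [k]) t" using t by (simp add: strict_prefix_def)
    moreover have "strict_prefix s (s @ [k])" by (simp add: strict_prefix_def)
    ultimately show False using immediate by blast
  qed
  then show "\<exists>k. t = s @ [k]" using t by blast
next
  assume "\<exists>k. t = s @ [k]"
  then obtain k where t: "t = s @ [k]" by blast
  have "\<not> (strict_prefix s u \<and> strict_prefix u t)" for u
    using prefix_length_less[of s u] prefix_length_less[of u t] t by auto
  then show "strict_prefix s t \<and> \<not> (\<exists>u. strict_prefix s u \<and> strict_prefix u t)"
    using t by (auto simp: strict_prefix_def)
qed

lemma finite_strict_prefixes: "finite {t. strict_prefix t s}"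
  by (rule finite_subset[of _ "set (prefixes s)"]) (auto simp: strict_prefix_def)

lemma card_strict_prefixes: "card {t. strict_prefix t s} = length s"
proof -
  have "{t. strict_prefix t s} = set (prefixes s) - {s}" by (auto simp: strict_prefix_def)
  then show ?thesis by (simp add: card_Diff_singleton)
qed

lemma prefix_map_upt: "m \<le> n \<Longrightarrow> prefix (map \<beta> [0..<m]) (map \<beta> [0..<n])"
  by (metis map_append prefixI upt_add_eq_append le0 le_add_diff_inverse)

lemma prefix_same_length_eq: "prefix s t \<Longrightarrow> length s = length t \<Longrightarrow> s = t"
  by (auto elim!: prefixE)

locale coded_baire_foliage =
  fixes X :: "'a topology" and N :: "'n set" and lt :: "'n \<Rightarrow> 'n \<Rightarrow> bool"
    and l :: "'n \<Rightarrow> 'a set" and f :: "'n \<Rightarrow> nat list"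
  assumes bij_code: "bij_betw f N UNIV"
    and lt_code: "\<And>x y. x \<in> N \<Longrightarrow> y \<in> N \<Longrightarrow> lt x y \<longleftrightarrow> strict_prefix (f x) (f y)"
    and open_leaves: "open_foliage X N l"
    and locally_strict: "locally_strict N lt l"
    and strict_branches: "strict_branches N lt l"
    and root_leaf: "l (tree_root N lt) = topspace X"

lemma baire_foliage_tree_coded:
  assumes "baire_foliage_tree X N lt l"
  obtains f where "coded_baire_foliage X N lt l f"
  using assms unfolding baire_foliage_tree_def omega_omega_tree_def coded_baire_foliage_def
  by blast

context coded_baire_foliage
begin

abbreviation node :: "nat list \<Rightarrow> 'n" where "node \<equiv> inv_into N f"
abbreviation leaf :: "nat list \<Rightarrow> 'a set" where "leaf s \<equiv> l (node s)"

lemma node_in: "node s \<in> N"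
  using bij_code by (simp add: bij_betw_def inv_into_into)

lemma code_node [simp]: "f (node s) = s"
  using bij_code by (simp add: bij_betw_def f_inv_into_f)

lemma node_code [simp]: "x \<in> N \<Longrightarrow> node (f x) = x"
  using bij_code by (simp add: bij_betw_def)

lemma node_eq_iff: "node s = node t \<longleftrightarrow> s = t"
  by (metis code_node)

lemma lt_node_iff: "lt (node s) (node t) \<longleftrightarrow> strict_prefix s t"
  using lt_code node_in code_node by metis

lemma leaf_code: "x \<in> N \<Longrightarrow> l x = leaf (f x)"
  by simp

lemma Collect_node: "{y\<in>N. P y} = node ` {t. P (node t)}"
proof
  show "{y\<in>N. P y} \<subseteq> node ` {t. P (node t)}"
  proof
    fix y assume "y \<in> {y\<in>N. P y}"
    then have "y = node (f y)" "P (node (f y))" by simp_all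
    then show "y \<in> node ` {t. P (node t)}" by blast
  qed
qed (auto simp: node_in)

lemma Bex_node: "(\<exists>z\<in>N. P z) \<longleftrightarrow> (\<exists>u. P (node u))"
  using node_in node_code by metis

lemma tree_root_eq: "tree_root N lt = node []"
  unfolding tree_root_def
proof (rule the_equality)
  have "lt (node []) x" if "x \<in> N" "x \<noteq> node []" for x
  proof -
    have "f x \<noteq> []" using that by (metis node_code)
    then have "strict_prefix [] (f x)" by (simp add: strict_prefix_def)
    then show ?thesis using lt_node_iff[of "[]" "f x"] that(1) by simp
  qed
  then show "node [] \<in> N \<and> (\<forall>x\<in>N. x \<noteq> node [] \<longrightarrow> lt (node []) x)"
    using node_in by blast
next
  fix r assume r: "r \<in> N \<and> (\<forall>x\<in>N. x \<noteq> r \<longrightarrow> lt r x)"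
  show "r = node []"
  proof (rule ccontr)
    assume "r \<noteq> node []"
    then have "lt r (node [])" using r node_in[of "[]"] by metis
    then have "strict_prefix (f r) []" using lt_node_iff[of "f r" "[]"] r by simp
    then show False by simp
  qed
qed

lemma sons_node: "sons N lt (node s) = range (\<lambda>k. node (s @ [k]))"
proof -
  have "sons N lt (node s) =
      node ` {t. strict_prefix s t \<and> \<not> (\<exists>u. strict_prefix s u \<and> strict_prefix u t)}"
    unfolding sons_def Collect_node Bex_node lt_node_iff ..
  also have "\<dots> = node ` {t. \<exists>k. t = s @ [k]}"
    by (simp only: immediate_strict_prefix_iff)
  finally show ?thesis by auto
qed

lemma node_not_maximal: "\<not> is_maximal_node N lt (node s)"
proof -
  have "lt (node s) (node (s @ [0]))" by (simp add: lt_node_iff strict_prefix_def)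
  then show ?thesis unfolding is_maximal_node_def using node_in by blast
qed

lemma leaf_sons:
  "leaf s = (\<Union>x\<in>sons N lt (node s). l x) \<and> disjoint_family_on l (sons N lt (node s))"
  using locally_strict node_in node_not_maximal unfolding locally_strict_def Ball_def by iprover

lemma leaf_eq_Union_snoc: "leaf s = (\<Union>k. leaf (s @ [k]))"
  using leaf_sons[of s, THEN conjunct1] by (simp only: sons_node image_image)

lemma leaf_snoc_disjoint: "k \<noteq> k' \<Longrightarrow> leaf (s @ [k]) \<inter> leaf (s @ [k']) = {}"
proof -
  assume "k \<noteq> k'"
  note leaf_sons[of s, THEN conjunct2]
  moreover have "node (s @ [k]) \<noteq> node (s @ [k'])" using \<open>k \<noteq> k'\<close> by (simp add: node_eq_iff)
  ultimately show ?thesis unfolding sons_node by (intro disjoint_family_onD) auto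
qed

lemma leaf_Nil: "leaf [] = topspace X"
  using root_leaf tree_root_eq by simp

lemma openin_leaf: "openin X (leaf s)"
  using open_leaves node_in unfolding open_foliage_def by blast

lemma leaf_subset_topspace: "leaf s \<subseteq> topspace X"
  using openin_leaf openin_subset by blast

lemma leaf_antimono: "prefix s t \<Longrightarrow> leaf t \<subseteq> leaf s"
proof (induction t rule: rev_induct)
  case (snoc k t)
  show ?case
  proof (cases "s = t @ [k]")
    case False
    with snoc.prems have "prefix s t" by simp
    then have "leaf t \<subseteq> leaf s" by (rule snoc.IH)
    moreover have "leaf (t @ [k]) \<subseteq> leaf t" by (subst (2) leaf_eq_Union_snoc) blast
    ultimately show ?thesis by blast
  qed simp
qed simp

lemma leaf_parallel_disjoint: "s \<parallel> t \<Longrightarrow> leaf s \<inter> leaf t = {}"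
proof -
  assume "s \<parallel> t"
  then obtain r b c bs cs where split: "b \<noteq> c" "s = r @ b # bs" "t = r @ c # cs"
    using parallel_decomp by blast
  have "leaf s \<subseteq> leaf (r @ [b])" by (rule leaf_antimono) (simp add: split(2))
  moreover have "leaf t \<subseteq> leaf (r @ [c])" by (rule leaf_antimono) (simp add: split(3))
  ultimately show ?thesis using leaf_snoc_disjoint[OF split(1)] by blast
qed

lemma leaf_same_length_disjoint: "length s = length t \<Longrightarrow> s \<noteq> t \<Longrightarrow> leaf s \<inter> leaf t = {}"
  by (simp add: leaf_parallel_disjoint not_equal_is_parallel)

lemma leaf_prefix_comparable: "p \<in> leaf s \<Longrightarrow> p \<in> leaf t \<Longrightarrow> prefix s t \<or> prefix t s"
  using leaf_parallel_disjoint[of s t] by blast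

lemma exists_leaf_of_length: "p \<in> topspace X \<Longrightarrow> \<exists>s. length s = n \<and> p \<in> leaf s"
proof (induction n)
  case 0 then show ?case using leaf_Nil by auto
next
  case (Suc n)
  then obtain s where s: "length s = n" "p \<in> leaf s" by blast
  then have "p \<in> (\<Union>k. leaf (s @ [k]))" by (subst (asm) leaf_eq_Union_snoc)
  then obtain k where "p \<in> leaf (s @ [k])" by blast
  with s(1) show ?case by (intro exI[of _ "s @ [k]"]) simp
qed

lemma closedin_leaf: "closedin X (leaf s)"
proof -
  let ?others = "\<Union>t\<in>{t. length t = length s \<and> t \<noteq> s}. leaf t"
  have "topspace X - leaf s = ?others"
  proof
    show "topspace X - leaf s \<subseteq> ?others"
    proof
      fix q assume q: "q \<in> topspace X - leaf s"
      then obtain t where "length t = length s" "q \<in> leaf t"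
        using exists_leaf_of_length by blast
      with q show "q \<in> ?others" by blast
    qed
    show "?others \<subseteq> topspace X - leaf s"
    proof
      fix q assume "q \<in> ?others"
      then obtain t where t: "length t = length s" "t \<noteq> s" "q \<in> leaf t" by blast
      then have "q \<notin> leaf s" using leaf_same_length_disjoint[OF t(1,2)] by blast
      with t(3) show "q \<in> topspace X - leaf s" using leaf_subset_topspace by blast
    qed
  qed
  moreover have "openin X ?others" by (rule openin_Union) (auto intro: openin_leaf)
  ultimately show ?thesis unfolding closedin_def using leaf_subset_topspace by simp
qed

text \<open>A set of pairwise comparable sequences meeting every length is a maximal chain, because
  two comparable sequences of equal length coincide.\<close>

lemma is_branch_node_image:
  assumes comparable: "\<And>s t. s \<in> S \<Longrightarrow> t \<in> S \<Longrightarrow> prefix s t \<or> prefix t s"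
    and every_length: "\<And>n. \<exists>s\<in>S. length s = n"
  shows "is_branch N lt (node ` S)"
proof -
  have "x = y \<or> lt x y \<or> lt y x" if x: "x \<in> node ` S" and y: "y \<in> node ` S" for x y
  proof -
    obtain s t where "s \<in> S" "t \<in> S" "x = node s" "y = node t" using x y by blast
    then show ?thesis using comparable[of s t] by (auto simp: lt_node_iff strict_prefix_def)
  qed
  then have chain: "is_chain N lt (node ` S)"
    unfolding is_chain_def using node_in by blast
  have "C \<subseteq> node ` S" if C: "is_chain N lt C" "node ` S \<subseteq> C" for C
  proof
    fix x assume x: "x \<in> C"
    then have "x \<in> N" using C(1) unfolding is_chain_def by blast
    obtain t where t: "t \<in> S" "length t = length (f x)" using every_length by blast
    then have "x = node t \<or> lt x (node t) \<or> lt (node t) x"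
      using C x unfolding is_chain_def by blast
    then have "f x = t"
      using t(2) lt_node_iff[of "f x" t] lt_node_iff[of t "f x"] prefix_length_less \<open>x \<in> N\<close>
      by (metis code_node node_code less_irrefl)
    then show "x \<in> node ` S" using t(1) \<open>x \<in> N\<close> by force
  qed
  then show ?thesis using chain unfolding is_branch_def by blast
qed

lemma scope_eq: "scope N l p = node ` {s. p \<in> leaf s}"
  unfolding scope_def Collect_node ..

lemma is_branch_scope: "p \<in> topspace X \<Longrightarrow> is_branch N lt (scope N l p)"
  unfolding scope_eq
  by (rule is_branch_node_image) (use leaf_prefix_comparable exists_leaf_of_length in blast)+

lemma point_eq_if_same_leaves:
  assumes "q \<in> topspace X" "q' \<in> topspace X" and same: "{s. q \<in> leaf s} = {s. q' \<in> leaf s}"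
  shows "q = q'"
proof -
  obtain r where r: "(\<Inter>x\<in>scope N l q. l x) = {r}"
    using strict_branches is_branch_scope[OF assms(1)] unfolding strict_branches_def by blast
  have same_scope: "scope N l q' = scope N l q" using same by (simp only: scope_eq)
  have "q \<in> {r}" unfolding r[symmetric] scope_def by blast
  moreover have "q' \<in> (\<Inter>x\<in>scope N l q'. l x)" unfolding scope_def by blast
  then have "q' \<in> {r}" unfolding same_scope r .
  ultimately show ?thesis by simp
qed

definition branch_point :: "(nat \<Rightarrow> nat) \<Rightarrow> 'a" where
  "branch_point \<beta> = the_elem (\<Inter>n. leaf (map \<beta> [0..<n]))"

lemma branch_point_in_leaf: "branch_point \<beta> \<in> leaf (map \<beta> [0..<n])"
proof -
  have "prefix (map \<beta> [0..<m]) (map \<beta> [0..<n]) \<or> prefix (map \<beta> [0..<n]) (map \<beta> [0..<m])"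
    for m n using prefix_map_upt nat_le_linear by blast
  then have "is_branch N lt (node ` range (\<lambda>n. map \<beta> [0..<n]))"
    by (intro is_branch_node_image) auto
  then obtain r where "(\<Inter>x\<in>node ` range (\<lambda>n. map \<beta> [0..<n]). l x) = {r}"
    using strict_branches unfolding strict_branches_def by blast
  then have "(\<Inter>n. leaf (map \<beta> [0..<n])) = {r}" by (simp add: image_image)
  then show ?thesis unfolding branch_point_def by auto
qed

lemma inj_branch_point: "inj branch_point"
proof (rule injI, rule ccontr)
  fix \<beta> \<gamma> assume eq: "branch_point \<beta> = branch_point \<gamma>" and "\<beta> \<noteq> \<gamma>"
  then obtain i where "\<beta> i \<noteq> \<gamma> i" by (auto simp: fun_eq_iff)
  then have "map \<beta> [0..<Suc i] ! i \<noteq> map \<gamma> [0..<Suc i] ! i" by (simp add: nth_append)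
  then have "map \<beta> [0..<Suc i] \<noteq> map \<gamma> [0..<Suc i]" by metis
  then have "leaf (map \<beta> [0..<Suc i]) \<inter> leaf (map \<gamma> [0..<Suc i]) = {}"
    by (intro leaf_same_length_disjoint) simp_all
  moreover have "branch_point \<beta> \<in> leaf (map \<beta> [0..<Suc i])" by (rule branch_point_in_leaf)
  moreover have "branch_point \<beta> \<in> leaf (map \<gamma> [0..<Suc i])"
    unfolding eq by (rule branch_point_in_leaf)
  ultimately show False by blast
qed

lemma leaf_eqpoll_Pow_nat: "leaf s \<approx> (UNIV :: nat set set)"
proof (rule lepoll_antisym)
  have "inj_on (\<lambda>q. to_nat ` {t. q \<in> leaf t}) (leaf s)"
  proof (rule inj_onI)
    fix q q' assume q: "q \<in> leaf s" "q' \<in> leaf s"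
      and "to_nat ` {t. q \<in> leaf t} = to_nat ` {t. q' \<in> leaf t}"
    then have "{t. q \<in> leaf t} = {t. q' \<in> leaf t}" by (simp add: inj_image_eq_iff inj_to_nat)
    then show "q = q'" using point_eq_if_same_leaves q leaf_subset_topspace by blast
  qed
  then show "leaf s \<lesssim> (UNIV :: nat set set)" unfolding lepoll_def by blast
next
  \<comment> \<open>Prolong \<open>s\<close> by the characteristic sequence of \<open>A\<close>.\<close>
  define extend where
    "extend A i = (if i < length s then s ! i else of_bool (i - length s \<in> A))" for A i
  have "inj extend"
  proof (rule injI)
    fix A B assume eq: "extend A = extend B"
    show "A = B"
    proof (rule set_eqI)
      fix j
      have "extend A (length s + j) = extend B (length s + j)" using eq by simp
      then show "j \<in> A \<longleftrightarrow> j \<in> B" by (simp add: extend_def of_bool_eq_iff)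
    qed
  qed
  then have "inj (branch_point \<circ> extend)" by (rule inj_compose[OF inj_branch_point])
  moreover have "map (extend A) [0..<length s] = s" for A
    by (rule nth_equalityI) (simp_all add: extend_def)
  then have "branch_point (extend A) \<in> leaf s" for A
    using branch_point_in_leaf[of "extend A" "length s"] by simp
  ultimately show "(UNIV :: nat set set) \<lesssim> leaf s"
    unfolding lepoll_def by (intro exI[of _ "branch_point \<circ> extend"]) auto
qed

lemma preds_node: "preds N lt (node s) = node ` {t. strict_prefix t s}"
  unfolding preds_def Collect_node lt_node_iff ..

lemma node_height_node: "node_height N lt (node s) = length s"
proof -
  have "inj_on node {t. strict_prefix t s}" by (simp add: inj_on_def node_eq_iff)
  then show ?thesis
    unfolding node_height_def preds_node by (simp add: card_image card_strict_prefixes)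
qed

lemma nonincreasing: "nonincreasing N lt l"
  unfolding nonincreasing_def
proof (intro ballI impI)
  fix x y assume "x \<in> N" "y \<in> N" "y = x \<or> lt x y"
  then have "prefix (f x) (f y)" using lt_code by (auto simp: strict_prefix_def)
  then have "leaf (f y) \<subseteq> leaf (f x)" by (rule leaf_antimono)
  then show "l y \<subseteq> l x" using \<open>x \<in> N\<close> \<open>y \<in> N\<close> by simp
qed

lemma flesh_eq_root_leaf: "flesh N l = l (tree_root N lt)"
proof -
  have "l x \<subseteq> leaf []" if "x \<in> N" for x
    using leaf_antimono[OF Nil_prefix, of "f x"] that by simp
  then show ?thesis unfolding flesh_def tree_root_eq using node_in by blast
qed

lemma tree_height_omega: "tree_height_omega N lt"
  unfolding tree_height_omega_def
proof (intro conjI ballI allI)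
  fix x assume "x \<in> N"
  then have "preds N lt x = node ` {t. strict_prefix t (f x)}" using preds_node[of "f x"] by simp
  then show "finite (preds N lt x)" by (simp add: finite_strict_prefixes)
next
  fix n
  show "\<exists>x\<in>N. node_height N lt x = n"
    using node_in node_height_node[of "replicate n 0"] by auto
qed

lemma leaf_clopen_eqpoll:
  assumes "v \<in> N"
  shows "closedin X (l v) \<and> openin X (l v) \<and> l v \<approx> (UNIV :: nat set set)"
  using closedin_leaf openin_leaf leaf_eqpoll_Pow_nat leaf_code[OF assms] by simp

lemma ex1_scope_node_height:
  assumes "p \<in> topspace X"
  shows "\<exists>!v. v \<in> scope N l p \<and> node_height N lt v = n"
proof -
  obtain s where s: "length s = n" "p \<in> leaf s" using exists_leaf_of_length[OF assms] by blast
  show ?thesis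
  proof (rule ex1I)
    show "node s \<in> scope N l p \<and> node_height N lt (node s) = n"
      using s node_height_node unfolding scope_eq by simp
  next
    fix w assume w: "w \<in> scope N l p \<and> node_height N lt w = n"
    then have "w \<in> N" "p \<in> leaf (f w)" unfolding scope_def by auto
    have "length (f w) = n" using w node_height_node[of "f w"] \<open>w \<in> N\<close> by simp
    have "prefix (f w) s \<or> prefix s (f w)"
      using \<open>p \<in> leaf (f w)\<close> s(2) by (rule leaf_prefix_comparable)
    then have "f w = s" using \<open>length (f w) = n\<close> s(1) prefix_same_length_eq by fastforce
    then show "w = node s" using node_code[OF \<open>w \<in> N\<close>] by simp
  qed
qed

end

theorem corollary5:
  fixes X :: "'a topology" and N :: "'n set" and lt :: "'n \<Rightarrow> 'n \<Rightarrow> bool"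
    and l :: "'n \<Rightarrow> 'a set" and p :: 'a
  assumes "baire_foliage_tree X N lt l" and "p \<in> topspace X"
  shows "(nonincreasing N lt l \<and> flesh N l = l (tree_root N lt) \<and> tree_height_omega N lt)
       \<and> (\<forall>v\<in>N. closedin X (l v) \<and> openin X (l v) \<and> l v \<approx> (UNIV :: nat set set))
       \<and> is_branch N lt (scope N l p)
       \<and> (\<forall>n::nat. \<exists>!v. v \<in> scope N l p \<and> node_height N lt v = n)"
proof -
  obtain f where "coded_baire_foliage X N lt l f"
    using baire_foliage_tree_coded[OF assms(1)] .
  then interpret coded_baire_foliage X N lt l f .
  show ?thesis
    using nonincreasing flesh_eq_root_leaf tree_height_omega leaf_clopen_eqpoll
      is_branch_scope[OF assms(2)] ex1_scope_node_height[OF assms(2)] by blast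
qed

end
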